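(* Let $q$ be a power of an odd prime, $n>3$ an odd integer with $\gcd(n,q-1)=1$, $\delta\in\mathbb{F}_{q^n}^*$ with $\delta\neq1$ and multiplicative order of $\delta$ dividing $q-1$, and $0<r<n$ an integer with $\gcd(r,n)=1$. Then $S(x)=x^q+\delta x^{q^{2r+1}}$ is a scattered polynomial of index $r+1$ over $\mathbb{F}_{q^n}$. Moreover, $S(x)$ is a scattered polynomial of index $t$ over $\mathbb{F}_{q^n}$ for each $t\in\{1,r+1,2r+1\}$.
   Context: For a polynomial $S\in\mathbb{F}_{q^n}[x]$ and a nonnegative integer $t$, $S$ is a scattered polynomial of index $t$ over $\mathbb{F}_{q^n}$ if for all $y,z\in\mathbb{F}_{q^n}^*$, $\frac{S(y)}{y^{q^t}}=\frac{S(z)}{z^{q^t}}$ implies $y/z\in\mathbb{F}_q$ (exponents $q^{e}$ are evaluated as maps on $\mathbb{F}_{q^n}$, so only $e \bmod n$ matters). *)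

theory Defs
  imports "HOL-Computational_Algebra.Polynomial"
begin

text \<open>The field F_{q^n} is modelled as a finite field type 'a with CARD('a) = q^n.\<close>

definition in_Fq :: "nat \<Rightarrow> 'a::field \<Rightarrow> bool" where
  "in_Fq q a \<longleftrightarrow> a ^ q = a"

definition scattered :: "nat \<Rightarrow> 'a::{finite,field} poly \<Rightarrow> nat \<Rightarrow> bool" where
  "scattered q S t \<longleftrightarrow>
     (\<forall>y z. y \<noteq> 0 \<longrightarrow> z \<noteq> 0 \<longrightarrow>
        poly S y / y ^ (q ^ t) = poly S z / z ^ (q ^ t) \<longrightarrow> in_Fq q (y / z))"

end

theory Submission
  imports Defs
begin

text \<open>Put \<open>\<lambda> = y/z\<close>; since Frobenius is bijective one may pass to \<open>\<mu> = \<lambda>^q\<close> and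
  \<open>w = z^q\<close>, and scatteredness of \<open>S(x) = x^q + \<delta> x^(q^(s+1))\<close> of index \<open>j+1\<close> becomes:
  \<open>\<mu> w + \<delta> \<mu>^(q^s) w^(q^s) = \<mu>^(q^j) (w + \<delta> w^(q^s))\<close> forces \<open>\<mu> \<in> F_q\<close>.
  For \<open>j = 0\<close> and \<open>j = s\<close> this says \<open>\<mu>^(q^s) = \<mu>\<close>, so \<open>\<mu> \<in> F_q\<close> once \<open>gcd(s,n) = 1\<close>.
  For \<open>s = 2r\<close>, \<open>j = r\<close> and \<open>a = \<mu> - \<mu>^(q^r)\<close> it becomes \<open>a w = \<delta> a^(q^r) w^(q^(2r))\<close>;
  if \<open>a \<noteq> 0\<close>, taking norms to \<open>F_q\<close> gives \<open>\<delta>^n = 1\<close>, impossible since \<open>\<delta> \<noteq> 1\<close> has order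
  dividing \<open>q - 1\<close>, which is coprime to \<open>n\<close>; so \<open>\<mu>^(q^r) = \<mu>\<close> and \<open>\<mu> \<in> F_q\<close>.\<close>

lemma power_card_minus_one_eq_one:
  fixes x :: "'a::{finite,field}"
  assumes "x \<noteq> 0"
  shows "x ^ (card (UNIV :: 'a set) - 1) = 1"
proof -
  let ?U = "UNIV - {0 :: 'a}"
  have card_U: "card ?U = card (UNIV :: 'a set) - 1"
    by (simp add: card_Diff_singleton)
  have "(\<Prod>y\<in>?U. x * y) = \<Prod>?U"
    by (rule prod.reindex_bij_witness[of _ "\<lambda>y. y / x" "\<lambda>y. x * y"]) (use assms in auto)
  hence "x ^ card ?U * \<Prod>?U = 1 * \<Prod>?U"
    by (simp add: prod.distrib)
  moreover have "\<Prod>?U \<noteq> 0"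
    by simp
  ultimately show ?thesis
    unfolding card_U by (rule mult_right_cancel[THEN iffD1, rotated])
qed

lemma power_card_eq_self:
  fixes x :: "'a::{finite,field}"
  shows "x ^ card (UNIV :: 'a set) = x"
proof (cases "x = 0")
  case False
  have "card (UNIV :: 'a set) = Suc (card (UNIV :: 'a set) - 1)"
    using finite_UNIV_card_ge_0[where ?'a = 'a] by simp
  then show ?thesis
    using power_card_minus_one_eq_one[OF False] by (metis power_Suc mult_1_right)
qed (use finite_UNIV_card_ge_0[where ?'a = 'a] in simp)

lemma CHAR_eq_if_card_eq_prime_power:
  assumes "prime p" "card (UNIV :: 'a::{finite,field} set) = p ^ e"
  shows "CHAR('a) = p"
proof -
  have "prime CHAR('a)"
    by (rule prime_CHAR_semidom) (simp add: finite_imp_CHAR_pos)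
  have "(\<Sum>x\<in>UNIV. x) = (\<Sum>x\<in>UNIV. x + (1 :: 'a))"
    by (rule sum.reindex_bij_witness[of _ "\<lambda>x. x + 1" "\<lambda>x. x - 1"]) auto
  then have "of_nat (card (UNIV :: 'a set)) = (0 :: 'a)"
    by (simp add: sum.distrib)
  then have "CHAR('a) dvd p ^ e"
    using assms(2) of_nat_eq_0_iff_char_dvd by metis
  then show ?thesis
    using \<open>prime CHAR('a)\<close> assms(1) by (simp add: prime_dvd_power primes_dvd_imp_eq)
qed

lemma power_pow_mult_eq_self:
  fixes x :: "'a::monoid_mult"
  assumes "x ^ (q ^ a) = x"
  shows "x ^ (q ^ (a * j)) = x"
proof (induction j)
  case (Suc j)
  have "x ^ (q ^ (a * Suc j)) = (x ^ (q ^ (a * j))) ^ (q ^ a)"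
    by (simp add: power_add power_mult[symmetric] mult.commute)
  then show ?case
    using Suc assms by simp
qed simp

lemma eq_one_if_powers_eq_one_coprime:
  fixes d :: "'a::field"
  assumes "d ^ a = 1" "d ^ b = 1" "a \<noteq> 0" "coprime a b"
  shows "d = 1"
proof -
  obtain u v where uv: "a * u = b * v + 1"
    using bezout_nat[OF assms(3), of b] assms(4) by auto
  have "1 = d ^ (a * u)"
    using assms(1) by (simp add: power_mult)
  also have "\<dots> = d ^ (b * v) * d"
    using uv by (simp add: power_add)
  also have "\<dots> = d"
    using assms(2) by (simp add: power_mult)
  finally show ?thesis
    by simp
qed

lemma geometric_sum_nat_mult_Suc:
  "(\<Sum>i<n. (q::nat) ^ i) * q + 1 = (\<Sum>i<n. q ^ i) + q ^ n"
  by (induction n) (auto simp: algebra_simps)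

locale Fqn_field =
  fixes q n :: nat and field_type :: "'a::{finite,field} itself"
  assumes card_eq: "card (UNIV :: 'a set) = q ^ n"
    and power_q_add: "\<And>x y :: 'a. (x + y) ^ q = x ^ q + y ^ q"
begin

lemma card_ge_2: "q ^ n \<ge> 2"
proof -
  have "card {0 :: 'a, 1} \<le> card (UNIV :: 'a set)"
    by (rule card_mono) auto
  then show ?thesis
    using card_eq by simp
qed

lemma n_pos: "n > 0"
  using card_ge_2 by (cases n) auto

lemma q_gt_1: "q > 1"
proof (rule ccontr)
  assume "\<not> q > 1"
  then have "q ^ n \<le> 1"
    by (intro power_le_one) auto
  with card_ge_2 show False
    by simp
qed

lemma power_q_pow_n: "(x::'a) ^ (q ^ n) = x"
  using power_card_eq_self[of x] card_eq by simp

lemma power_q_inj: "(x::'a) ^ q = y ^ q \<Longrightarrow> x = y"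
  by (metis power_q_pow_n power_mult power_Suc Suc_pred n_pos)

lemma power_q_pow_add: "((x::'a) + y) ^ (q ^ j) = x ^ (q ^ j) + y ^ (q ^ j)"
proof (induction j)
  case (Suc j)
  have "(x + y) ^ (q ^ Suc j) = ((x + y) ^ (q ^ j)) ^ q"
    by (simp add: power_mult[symmetric] mult.commute)
  also have "\<dots> = x ^ (q ^ Suc j) + y ^ (q ^ Suc j)"
    by (simp add: Suc power_q_add power_mult[symmetric] mult.commute)
  finally show ?case .
qed simp

lemma power_q_pow_diff: "((x::'a) - y) ^ (q ^ j) = x ^ (q ^ j) - y ^ (q ^ j)"
  using power_q_pow_add[of "x - y" y j] by (simp add: algebra_simps)

lemma in_Fq_if_power_q_pow_eq_self:
  assumes "(x::'a) ^ (q ^ a) = x" "coprime a n"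
  shows "in_Fq q x"
proof -
  obtain u v where uv: "n * u = a * v + 1"
    using bezout_nat[OF n_pos[THEN gr_implies_not0], of a] assms(2)
    by (auto simp: coprime_commute)
  have "x = x ^ (q ^ (n * u))"
    using power_pow_mult_eq_self[of x q n u] power_q_pow_n by simp
  also have "\<dots> = (x ^ (q ^ (a * v))) ^ q"
  proof -
    have "q ^ (n * u) = q ^ (a * v) * q"
      by (simp add: uv)
    then show ?thesis
      by (simp only: power_mult)
  qed
  also have "x ^ (q ^ (a * v)) = x"
    by (rule power_pow_mult_eq_self[OF assms(1)])
  finally show ?thesis
    unfolding in_Fq_def by simp
qed

text \<open>\<open>x \<mapsto> x^norm_exp\<close> is the norm map \<open>F_(q^n) \<rightarrow> F_q\<close>, as \<open>norm_exp = (q^n - 1)/(q - 1)\<close>.\<close>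

definition norm_exp :: nat where
  "norm_exp = (\<Sum>i<n. q ^ i)"

lemma norm_exp_pos: "norm_exp > 0"
  unfolding norm_exp_def using n_pos by (intro sum_pos2[of _ 0]) auto

lemma norm_in_Fq: "in_Fq q ((x::'a) ^ norm_exp)"
proof (cases "x = 0")
  case True
  then show ?thesis
    using norm_exp_pos q_gt_1 by (simp add: in_Fq_def power_0_left)
next
  case False
  have "x ^ (norm_exp * q) * x = x ^ (norm_exp * q + 1)"
    by simp
  also have "norm_exp * q + 1 = norm_exp + q ^ n"
    using geometric_sum_nat_mult_Suc[where q = q and n = n] by (simp add: norm_exp_def)
  finally have "x ^ (norm_exp * q) * x = x ^ norm_exp * x ^ (q ^ n)"
    by (simp add: power_add)
  then have "x ^ (norm_exp * q) = x ^ norm_exp"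
    using False power_q_pow_n by simp
  then show ?thesis
    by (simp add: in_Fq_def power_mult)
qed

lemma norm_power_q_pow: "((x::'a) ^ (q ^ j)) ^ norm_exp = x ^ norm_exp"
proof -
  have "((x::'a) ^ (q ^ j)) ^ norm_exp = (x ^ norm_exp) ^ (q ^ (1 * j))"
    by (simp add: power_mult[symmetric] mult.commute)
  also have "\<dots> = x ^ norm_exp"
    using norm_in_Fq[of x] by (intro power_pow_mult_eq_self) (simp add: in_Fq_def)
  finally show ?thesis .
qed

lemma norm_of_in_Fq:
  assumes "in_Fq q (d::'a)"
  shows "d ^ norm_exp = d ^ n"
  unfolding norm_exp_def
proof (induction n)
  case (Suc k)
  have "d ^ (q ^ k) = d"
    using power_pow_mult_eq_self[of d q 1 k] assms by (simp add: in_Fq_def)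
  then show ?case
    using Suc by (simp add: power_add)
qed simp

lemma norm_eq_one_if_twisted_eq:
  assumes eq: "a * w = \<delta> * a ^ (q ^ i) * w ^ (q ^ j)"
    and "a \<noteq> 0" "w \<noteq> 0" "in_Fq q (\<delta>::'a)"
  shows "\<delta> ^ n = 1"
proof -
  have "(a * w) ^ norm_exp = (\<delta> * a ^ (q ^ i) * w ^ (q ^ j)) ^ norm_exp"
    by (simp only: eq)
  also have "\<dots> = \<delta> ^ norm_exp * (a * w) ^ norm_exp"
    by (simp only: power_mult_distrib norm_power_q_pow mult.assoc)
  finally have "(a * w) ^ norm_exp = \<delta> ^ norm_exp * (a * w) ^ norm_exp" .
  moreover have "(a * w) ^ norm_exp \<noteq> 0"
    using assms(2,3) by simp
  ultimately have "\<delta> ^ norm_exp = 1"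
    by (metis mult_cancel_right1 mult.commute)
  then show ?thesis
    using norm_of_in_Fq[OF assms(4)] by simp
qed

lemma scattered_binomialI:
  fixes \<delta> :: 'a
  assumes key: "\<And>\<mu> w. \<mu> \<noteq> 0 \<Longrightarrow> w \<noteq> 0 \<Longrightarrow>
      \<mu> * w + \<delta> * \<mu> ^ (q ^ s) * w ^ (q ^ s) = \<mu> ^ (q ^ j) * (w + \<delta> * w ^ (q ^ s)) \<Longrightarrow>
      in_Fq q \<mu>"
  shows "scattered q (monom 1 q + monom \<delta> (q ^ (s + 1))) (j + 1)"
  unfolding scattered_def
proof (intro allI impI)
  fix y z :: 'a
  assume "y \<noteq> 0" "z \<noteq> 0"
  assume eq: "poly (monom 1 q + monom \<delta> (q ^ (s + 1))) y / y ^ q ^ (j + 1) =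
      poly (monom 1 q + monom \<delta> (q ^ (s + 1))) z / z ^ q ^ (j + 1)"
  define l where "l = y / z"
  define \<mu> where "\<mu> = l ^ q"
  define w where "w = z ^ q"
  have y_eq: "y = l * z"
    using \<open>z \<noteq> 0\<close> by (simp add: l_def)
  have "l \<noteq> 0" "\<mu> \<noteq> 0" "w \<noteq> 0"
    using \<open>y \<noteq> 0\<close> \<open>z \<noteq> 0\<close> by (simp_all add: l_def \<mu>_def w_def)
  have pow_Suc: "x ^ q ^ (k + 1) = (x ^ q) ^ q ^ k" for x :: 'a and k
    by (simp add: power_mult[symmetric] mult.commute)
  have "(\<mu> * w + \<delta> * \<mu> ^ (q ^ s) * w ^ (q ^ s)) / (\<mu> ^ (q ^ j) * w ^ (q ^ j)) =
      (w + \<delta> * w ^ (q ^ s)) / w ^ (q ^ j)"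
    using eq unfolding y_eq poly_add poly_monom pow_Suc
    by (simp add: \<mu>_def w_def power_mult_distrib mult.assoc)
  then have "\<mu> * w + \<delta> * \<mu> ^ (q ^ s) * w ^ (q ^ s) =
      (w + \<delta> * w ^ (q ^ s)) / w ^ (q ^ j) * (\<mu> ^ (q ^ j) * w ^ (q ^ j))"
    using \<open>\<mu> \<noteq> 0\<close> \<open>w \<noteq> 0\<close> by (simp add: divide_eq_eq)
  also have "\<dots> = \<mu> ^ (q ^ j) * (w + \<delta> * w ^ (q ^ s))"
    using \<open>w \<noteq> 0\<close> by simp
  finally have "\<mu> * w + \<delta> * \<mu> ^ (q ^ s) * w ^ (q ^ s) = \<mu> ^ (q ^ j) * (w + \<delta> * w ^ (q ^ s))" .
  then have "in_Fq q \<mu>"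
    using key \<open>\<mu> \<noteq> 0\<close> \<open>w \<noteq> 0\<close> by blast
  then show "in_Fq q (y / z)"
    using power_q_inj[of "l ^ q" l] by (simp add: in_Fq_def \<mu>_def l_def)
qed

lemma scattered_binomial_index_1:
  fixes \<delta> :: 'a
  assumes "\<delta> \<noteq> 0" "coprime s n"
  shows "scattered q (monom 1 q + monom \<delta> (q ^ (s + 1))) 1"
proof -
  have "in_Fq q \<mu>" if "\<mu> \<noteq> 0" "w \<noteq> 0"
      and eq: "\<mu> * w + \<delta> * \<mu> ^ (q ^ s) * w ^ (q ^ s) = \<mu> ^ (q ^ 0) * (w + \<delta> * w ^ (q ^ s))"
    for \<mu> w
  proof -
    have "\<delta> * w ^ (q ^ s) * \<mu> ^ (q ^ s) = \<delta> * w ^ (q ^ s) * \<mu>"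
      using eq by (simp add: algebra_simps)
    then have "\<mu> ^ (q ^ s) = \<mu>"
      using assms(1) \<open>w \<noteq> 0\<close> by simp
    then show ?thesis
      using assms(2) by (rule in_Fq_if_power_q_pow_eq_self)
  qed
  then show ?thesis
    using scattered_binomialI[where j = 0 and s = s and \<delta> = \<delta>] by simp
qed

lemma scattered_binomial_index_Suc:
  fixes \<delta> :: 'a
  assumes "coprime s n"
  shows "scattered q (monom 1 q + monom \<delta> (q ^ (s + 1))) (s + 1)"
proof (rule scattered_binomialI)
  fix \<mu> w :: 'a
  assume "\<mu> \<noteq> 0" "w \<noteq> 0"
    and eq: "\<mu> * w + \<delta> * \<mu> ^ (q ^ s) * w ^ (q ^ s) = \<mu> ^ (q ^ s) * (w + \<delta> * w ^ (q ^ s))"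
  then have "\<mu> ^ (q ^ s) = \<mu>"
    by (simp add: algebra_simps)
  then show "in_Fq q \<mu>"
    using assms by (rule in_Fq_if_power_q_pow_eq_self)
qed

lemma scattered_binomial_middle_index:
  fixes \<delta> :: 'a
  assumes "in_Fq q \<delta>" "\<delta> ^ n \<noteq> 1" "coprime r n"
  shows "scattered q (monom 1 q + monom \<delta> (q ^ (2 * r + 1))) (r + 1)"
proof (rule scattered_binomialI)
  fix \<mu> w :: 'a
  assume "\<mu> \<noteq> 0" "w \<noteq> 0"
    and eq: "\<mu> * w + \<delta> * \<mu> ^ (q ^ (2 * r)) * w ^ (q ^ (2 * r)) =
      \<mu> ^ (q ^ r) * (w + \<delta> * w ^ (q ^ (2 * r)))"
  define a where "a = \<mu> - \<mu> ^ (q ^ r)"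
  have a_pow: "a ^ (q ^ r) = \<mu> ^ (q ^ r) - \<mu> ^ (q ^ (2 * r))"
    unfolding a_def power_q_pow_diff by (simp add: mult_2 power_add power_mult)
  have "a * w = \<delta> * (\<mu> ^ (q ^ r) - \<mu> ^ (q ^ (2 * r))) * w ^ (q ^ (2 * r))"
    using eq by (simp add: a_def algebra_simps)
  then have twisted: "a * w = \<delta> * a ^ (q ^ r) * w ^ (q ^ (2 * r))"
    by (simp only: a_pow)
  have "a = 0"
    using norm_eq_one_if_twisted_eq[OF twisted _ \<open>w \<noteq> 0\<close> assms(1)] assms(2) by blast
  then have "\<mu> ^ (q ^ r) = \<mu>"
    by (simp add: a_def)
  then show "in_Fq q \<mu>"
    using assms(3) by (rule in_Fq_if_power_q_pow_eq_self)
qed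

end

theorem mainTheorem13:
  fixes q n r k p :: nat and \<delta> :: "'a::{finite,field}"
  assumes "prime p" and "odd p" and "k > 0" and "q = p ^ k"
    and "card (UNIV :: 'a set) = q ^ n"
    and "n > 3" and "odd n" and "gcd n (q - 1) = 1"
    and "\<delta> \<noteq> 0" and "\<delta> \<noteq> 1" and "\<delta> ^ (q - 1) = 1"
    and "0 < r" and "r < n" and "coprime r n"
  shows "scattered q (monom 1 q + monom \<delta> (q ^ (2 * r + 1))) (r + 1) \<and>
         (\<forall>t \<in> {1, r + 1, 2 * r + 1}.
            scattered q (monom 1 q + monom \<delta> (q ^ (2 * r + 1))) t)"
proof -
  have "CHAR('a) = p"
    using assms(1,4,5)
    by (intro CHAR_eq_if_card_eq_prime_power[where e = "k * n"]) (simp_all add: power_mult)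
  then interpret Fqn_field q n "TYPE('a)"
    using assms(1,4,5) by unfold_locales (auto intro: freshmans_dream')
  have "in_Fq q \<delta>"
    using assms(11) q_gt_1 by (simp add: in_Fq_def power_eq_if)
  moreover have "\<delta> ^ n \<noteq> 1"
    using eq_one_if_powers_eq_one_coprime[of \<delta> n "q - 1"] assms(6,8,10,11)
    by (auto simp: coprime_iff_gcd_eq_1)
  moreover have "coprime (2 * r) n"
    using assms(7,14) by simp
  ultimately show ?thesis
    using scattered_binomial_index_1[OF assms(9), of "2 * r"]
      scattered_binomial_index_Suc[of "2 * r" \<delta>] scattered_binomial_middle_index[of \<delta> r] assms(14)
    by auto
qed

end
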